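(* Let $\mathcal{T}$ be a fully sparse tournament with ordering $\sigma$ and backward arcs $e_1,\dots,e_b$. Let $G'$ be the digraph with vertex set $\{e_1,\dots,e_b\}$ having an arc $e_ie_j$ ($i\ne j$) whenever $(h(e_i),h(e_j),t(e_i))$ or $(h(e_i),t(e_j),t(e_i))$ is a triangle of $\mathcal{T}$ (equivalently, whenever $h(e_j)$ or $t(e_j)$ lies strictly between $h(e_i)$ and $t(e_i)$ in $\sigma$). Then the maximum number of pairwise arc-disjoint triangles of $\mathcal{T}$ equals the maximum size of an arc set $X\subseteq A(G')$ such that every vertex of $G'$ has out-degree at most $1$ in $X$ and $X$ contains no digon (no pair of arcs $xy,yx$). Moreover, for such a set $X$, the triangles $\Pi(e_ie_j)$, $e_ie_j\in X$, are pairwise arc-disjoint, where $\Pi(e_ie_j)$ is the triangle formed by $e_i$ and the endpoint of $e_j$ lying strictly between $h(e_i)$ and $t(e_i)$; and $X$ is optimal if and only if $\{\Pi(x):x\in X\}$ is a maximum triangle packing of $\mathcal{T}$.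
   Context: A tournament is an orientation of a complete graph; a triangle is a directed cycle of length 3. For an arc $a=uv$, $h(a)=v$ is its head and $t(a)=u$ its tail. Given a linear ordering $\sigma$ of the vertices, an arc $uv$ is backward if $v$ comes before $u$ in $\sigma$. $\mathcal{T}$ is fully sparse (with respect to $\sigma$) if the backward arcs form a matching, no backward arc joins two consecutive vertices of $\sigma$, and every vertex is the head or the tail of some backward arc. *)

theory Defs
  imports Main
begin

definition arc_tail :: "'a \<times> 'a \<Rightarrow> 'a" where "arc_tail a = fst a"
definition arc_head :: "'a \<times> 'a \<Rightarrow> 'a" where "arc_head a = snd a"

definition tournament :: "'a set \<Rightarrow> ('a \<times> 'a) set \<Rightarrow> bool" where
  "tournament V A \<longleftrightarrow> A \<subseteq> V \<times> V \<and> (\<forall>v. (v, v) \<notin> A) \<and>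
     (\<forall>u\<in>V. \<forall>v\<in>V. u \<noteq> v \<longrightarrow> ((u, v) \<in> A \<longleftrightarrow> (v, u) \<notin> A))"

definition is_ordering :: "'a set \<Rightarrow> 'a list \<Rightarrow> bool" where
  "is_ordering V \<sigma> \<longleftrightarrow> distinct \<sigma> \<and> set \<sigma> = V"

definition before :: "'a list \<Rightarrow> 'a \<Rightarrow> 'a \<Rightarrow> bool" where
  "before \<sigma> u v \<longleftrightarrow> (\<exists>i j. i < j \<and> j < length \<sigma> \<and> \<sigma> ! i = u \<and> \<sigma> ! j = v)"

definition strictly_between :: "'a list \<Rightarrow> 'a \<Rightarrow> 'a \<Rightarrow> 'a \<Rightarrow> bool" where
  "strictly_between \<sigma> x u v \<longleftrightarrow> before \<sigma> u x \<and> before \<sigma> x v"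

definition consecutive :: "'a list \<Rightarrow> 'a \<Rightarrow> 'a \<Rightarrow> bool" where
  "consecutive \<sigma> u v \<longleftrightarrow> (\<exists>i. Suc i < length \<sigma> \<and>
      ((\<sigma> ! i = u \<and> \<sigma> ! Suc i = v) \<or> (\<sigma> ! i = v \<and> \<sigma> ! Suc i = u)))"

definition backward_arcs :: "('a \<times> 'a) set \<Rightarrow> 'a list \<Rightarrow> ('a \<times> 'a) set" where
  "backward_arcs A \<sigma> = {a \<in> A. before \<sigma> (arc_head a) (arc_tail a)}"

definition fully_sparse :: "'a set \<Rightarrow> ('a \<times> 'a) set \<Rightarrow> 'a list \<Rightarrow> bool" where
  "fully_sparse V A \<sigma> \<longleftrightarrow>
     (\<forall>a\<in>backward_arcs A \<sigma>. \<forall>b\<in>backward_arcs A \<sigma>. a \<noteq> b \<longrightarrow>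
         {arc_tail a, arc_head a} \<inter> {arc_tail b, arc_head b} = {}) \<and>
     (\<forall>a\<in>backward_arcs A \<sigma>. \<not> consecutive \<sigma> (arc_tail a) (arc_head a)) \<and>
     (\<forall>v\<in>V. \<exists>a\<in>backward_arcs A \<sigma>. v = arc_head a \<or> v = arc_tail a)"

definition is_triangle :: "('a \<times> 'a) set \<Rightarrow> 'a \<Rightarrow> 'a \<Rightarrow> 'a \<Rightarrow> bool" where
  "is_triangle A x y z \<longleftrightarrow> (x, y) \<in> A \<and> (y, z) \<in> A \<and> (z, x) \<in> A"

definition tri_arcs :: "'a \<Rightarrow> 'a \<Rightarrow> 'a \<Rightarrow> ('a \<times> 'a) set" where
  "tri_arcs x y z = {(x, y), (y, z), (z, x)}"

definition triangles :: "('a \<times> 'a) set \<Rightarrow> ('a \<times> 'a) set set" where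
  "triangles A = {tri_arcs x y z | x y z. is_triangle A x y z}"

definition triangle_packing :: "('a \<times> 'a) set \<Rightarrow> ('a \<times> 'a) set set \<Rightarrow> bool" where
  "triangle_packing A P \<longleftrightarrow> P \<subseteq> triangles A \<and>
     (\<forall>S\<in>P. \<forall>T\<in>P. S \<noteq> T \<longrightarrow> S \<inter> T = {})"

definition packing_number :: "('a \<times> 'a) set \<Rightarrow> nat" where
  "packing_number A = Max (card ` {P. triangle_packing A P})"

definition max_triangle_packing :: "('a \<times> 'a) set \<Rightarrow> ('a \<times> 'a) set set \<Rightarrow> bool" where
  "max_triangle_packing A P \<longleftrightarrow> triangle_packing A P \<and> card P = packing_number A"

definition G'_arcs :: "('a \<times> 'a) set \<Rightarrow> 'a list \<Rightarrow> (('a \<times> 'a) \<times> ('a \<times> 'a)) set" where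
  "G'_arcs A \<sigma> = {(e, f). e \<in> backward_arcs A \<sigma> \<and> f \<in> backward_arcs A \<sigma> \<and> e \<noteq> f \<and>
      (is_triangle A (arc_head e) (arc_head f) (arc_tail e) \<or>
       is_triangle A (arc_head e) (arc_tail f) (arc_tail e))}"

definition good_arc_set :: "('a \<times> 'a) set \<Rightarrow> 'a list \<Rightarrow> (('a \<times> 'a) \<times> ('a \<times> 'a)) set \<Rightarrow> bool" where
  "good_arc_set A \<sigma> X \<longleftrightarrow> X \<subseteq> G'_arcs A \<sigma> \<and>
     (\<forall>e f g. (e, f) \<in> X \<longrightarrow> (e, g) \<in> X \<longrightarrow> f = g) \<and>
     (\<forall>e f. (e, f) \<in> X \<longrightarrow> (f, e) \<notin> X)"

text \<open>Pi(e f): triangle formed by e and the endpoint of f strictly between head e and tail e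
  (the head of f is preferred if both endpoints lie strictly between).\<close>
definition Pi_tri :: "'a list \<Rightarrow> ('a \<times> 'a) \<times> ('a \<times> 'a) \<Rightarrow> ('a \<times> 'a) set" where
  "Pi_tri \<sigma> ef = (let e = fst ef; f = snd ef;
      x = (if strictly_between \<sigma> (arc_head f) (arc_head e) (arc_tail e) then arc_head f else arc_tail f)
    in tri_arcs (arc_head e) x (arc_tail e))"

end

theory Submission
  imports Defs
begin

text \<open>Two backward arcs never share a vertex, while any two arcs of a triangle do; and a triangle
  cannot consist of forward arcs only. Hence every triangle consists of exactly one backward arc
  \<open>e\<close> and a vertex strictly between its endpoints, and conversely every such vertex gives a
  triangle. Since every vertex is an endpoint of a backward arc \<open>f\<close>, a triangle is encoded by an
  arc \<open>e f\<close> of G'. In a packing the triangles have distinct backward arcs (out-degree at most 1),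
  and a digon \<open>e f, f e\<close> would force the two encoded triangles to share the arc joining an endpoint
  of \<open>e\<close> to one of \<open>f\<close>. The same observations show that \<open>\<Pi>\<close> maps good arc sets injectively to
  packings, so both problems realise the same cardinalities.\<close>

lemma before_imp_in_set: "before \<sigma> u v \<Longrightarrow> u \<in> set \<sigma> \<and> v \<in> set \<sigma>"
  unfolding before_def by auto

lemma before_asym: "distinct \<sigma> \<Longrightarrow> before \<sigma> u v \<Longrightarrow> \<not> before \<sigma> v u"
  unfolding before_def by (metis less_asym' less_trans nth_eq_iff_index_eq)

lemma before_trans: "distinct \<sigma> \<Longrightarrow> before \<sigma> u v \<Longrightarrow> before \<sigma> v w \<Longrightarrow> before \<sigma> u w"
  unfolding before_def by (metis less_trans nth_eq_iff_index_eq)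

lemma before_total: "u \<in> set \<sigma> \<Longrightarrow> v \<in> set \<sigma> \<Longrightarrow> u \<noteq> v \<Longrightarrow> before \<sigma> u v \<or> before \<sigma> v u"
  unfolding before_def by (metis in_set_conv_nth linorder_neqE_nat)

lemma strictly_between_distinct:
  "distinct \<sigma> \<Longrightarrow> strictly_between \<sigma> w u v \<Longrightarrow> w \<noteq> u \<and> w \<noteq> v \<and> u \<noteq> v"
  unfolding strictly_between_def by (metis before_asym before_trans)

lemma tri_arcs_rotate: "tri_arcs x y z = tri_arcs y z x"
  unfolding tri_arcs_def by auto

lemma tri_arcs_disjoint_if_one_common_vertex:
  assumes "x \<noteq> y" "y \<noteq> z" "z \<noteq> x" and "{x, y, z} \<inter> {x', y', z'} \<subseteq> {v}"
  shows "tri_arcs x y z \<inter> tri_arcs x' y' z' = {}"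
  using assms unfolding tri_arcs_def by auto

lemma tri_arcs_nonempty: "tri_arcs x y z \<noteq> {}"
  unfolding tri_arcs_def by simp

locale fully_sparse_tournament =
  fixes V :: "'a set" and A :: "('a \<times> 'a) set" and \<sigma> :: "'a list"
  assumes tournament: "tournament V A" and ordering: "is_ordering V \<sigma>"
    and fully_sparse: "fully_sparse V A \<sigma>"
begin

abbreviation B where "B \<equiv> backward_arcs A \<sigma>"

lemma distinct_ordering: "distinct \<sigma>" and set_ordering: "set \<sigma> = V"
  using ordering unfolding is_ordering_def by auto

lemma arc_in_vertices: "(u, v) \<in> A \<Longrightarrow> u \<in> V \<and> v \<in> V"
  using tournament unfolding tournament_def by blast

lemma arc_irrefl: "(v, v) \<notin> A"
  using tournament unfolding tournament_def by blast

lemma arc_iff_not_reverse: "u \<in> V \<Longrightarrow> v \<in> V \<Longrightarrow> u \<noteq> v \<Longrightarrow> (u, v) \<in> A \<longleftrightarrow> (v, u) \<notin> A"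
  using tournament unfolding tournament_def by blast

lemma backward_arcs_iff: "(u, v) \<in> B \<longleftrightarrow> (u, v) \<in> A \<and> before \<sigma> v u"
  by (simp add: backward_arcs_def arc_head_def arc_tail_def)

lemma backward_arcs_disjoint:
  "a \<in> B \<Longrightarrow> b \<in> B \<Longrightarrow> a \<noteq> b \<Longrightarrow> {fst a, snd a} \<inter> {fst b, snd b} = {}"
  using fully_sparse unfolding fully_sparse_def arc_head_def arc_tail_def by blast

lemma backward_arcs_cover: "v \<in> V \<Longrightarrow> \<exists>f\<in>B. v \<in> {fst f, snd f}"
  using fully_sparse unfolding fully_sparse_def arc_head_def arc_tail_def by blast

lemma forward_if_not_backward: "(u, v) \<in> A \<Longrightarrow> (u, v) \<notin> B \<Longrightarrow> before \<sigma> u v"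
  using before_total[of u \<sigma> v] arc_in_vertices arc_irrefl backward_arcs_iff set_ordering by blast

lemma triangle_on_backward_arc_iff:
  assumes "(t, h) \<in> B"
  shows "is_triangle A h w t \<longleftrightarrow> strictly_between \<sigma> w h t"
proof
  have "t \<noteq> h" using assms backward_arcs_iff arc_irrefl by blast
  assume "is_triangle A h w t"
  then have "(h, w) \<in> A" "(w, t) \<in> A" unfolding is_triangle_def by auto
  moreover have "(h, w) \<notin> B" "(w, t) \<notin> B"
    using backward_arcs_disjoint[OF _ assms] \<open>t \<noteq> h\<close> by fastforce+
  ultimately show "strictly_between \<sigma> w h t"
    unfolding strictly_between_def using forward_if_not_backward by blast
next
  assume between: "strictly_between \<sigma> w h t"
  then have hw: "before \<sigma> h w" and wt: "before \<sigma> w t" unfolding strictly_between_def by auto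
  then have in_V: "h \<in> V" "w \<in> V" "t \<in> V"
    using before_imp_in_set[OF hw] before_imp_in_set[OF wt] set_ordering by auto
  have "w \<noteq> h" "w \<noteq> t" using strictly_between_distinct[OF distinct_ordering between] by auto
  \<comment> \<open>a reversed arc would be a backward arc sharing an endpoint with \<open>(t, h)\<close>\<close>
  have "(w, h) \<notin> B" "(t, w) \<notin> B"
    using backward_arcs_disjoint[OF _ assms] \<open>w \<noteq> h\<close> \<open>w \<noteq> t\<close> by fastforce+
  then have "(h, w) \<in> A" "(w, t) \<in> A"
    using arc_iff_not_reverse in_V \<open>w \<noteq> h\<close> \<open>w \<noteq> t\<close> hw wt backward_arcs_iff by blast+
  moreover have "(t, h) \<in> A" using assms backward_arcs_iff by blast
  ultimately show "is_triangle A h w t" unfolding is_triangle_def by blast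
qed

lemma triangle_through_backward_arc:
  assumes "is_triangle A x y z"
  obtains t h w where "(t, h) \<in> B" "strictly_between \<sigma> w h t" "tri_arcs x y z = tri_arcs h w t"
proof -
  have arcs: "(x, y) \<in> A" "(y, z) \<in> A" "(z, x) \<in> A" using assms unfolding is_triangle_def by auto
  have not_all_forward: "\<not> (before \<sigma> x y \<and> before \<sigma> y z \<and> before \<sigma> z x)"
    using before_trans[OF distinct_ordering] before_asym[OF distinct_ordering] by blast
  have "\<exists>t h w. (t, h) \<in> B \<and> strictly_between \<sigma> w h t \<and> tri_arcs x y z = tri_arcs h w t"
  proof (cases "(z, x) \<in> B \<or> (x, y) \<in> B \<or> (y, z) \<in> B")
    case True
    then show ?thesis
      using triangle_on_backward_arc_iff assms tri_arcs_rotate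
      unfolding is_triangle_def by metis
  next
    case False
    then show ?thesis using forward_if_not_backward arcs not_all_forward by blast
  qed
  then show ?thesis using that by blast
qed

lemma G'_arcs_iff:
  "(e, f) \<in> G'_arcs A \<sigma> \<longleftrightarrow> e \<in> B \<and> f \<in> B \<and>
     (\<exists>w\<in>{fst f, snd f}. strictly_between \<sigma> w (snd e) (fst e))"
proof -
  have "e \<noteq> f" if "strictly_between \<sigma> w (snd e) (fst e)" "w \<in> {fst f, snd f}" for w
    using strictly_between_distinct[OF distinct_ordering that(1)] that(2) by auto
  then show ?thesis
    using triangle_on_backward_arc_iff[of "fst e" "snd e"]
    unfolding G'_arcs_def arc_head_def arc_tail_def by auto
qed

lemma Pi_tri_G'_arc:
  assumes "(e, f) \<in> G'_arcs A \<sigma>"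
  obtains w where "w \<in> {fst f, snd f}" "strictly_between \<sigma> w (snd e) (fst e)"
    "Pi_tri \<sigma> (e, f) = tri_arcs (snd e) w (fst e)"
proof (cases "strictly_between \<sigma> (snd f) (snd e) (fst e)")
  case True
  then show ?thesis
    using that[of "snd f"] unfolding Pi_tri_def arc_head_def arc_tail_def by simp
next
  case False
  then have "strictly_between \<sigma> (fst f) (snd e) (fst e)" using assms G'_arcs_iff by auto
  then show ?thesis
    using that[of "fst f"] False unfolding Pi_tri_def arc_head_def arc_tail_def by simp
qed

lemma Pi_tri_in_triangles:
  assumes "x \<in> G'_arcs A \<sigma>"
  shows "Pi_tri \<sigma> x \<in> triangles A"
proof -
  obtain e f where ef: "x = (e, f)" by (cases x)
  then obtain w where "strictly_between \<sigma> w (snd e) (fst e)"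
      "Pi_tri \<sigma> x = tri_arcs (snd e) w (fst e)"
    using Pi_tri_G'_arc assms by metis
  moreover have "(fst e, snd e) \<in> B" using assms ef G'_arcs_iff by simp
  ultimately show ?thesis
    using triangle_on_backward_arc_iff unfolding triangles_def by blast
qed

lemma triangles_of_digon_intersect:
  assumes "w \<in> {fst f, snd f}" "strictly_between \<sigma> w (snd e) (fst e)"
    and "w' \<in> {fst e, snd e}" "strictly_between \<sigma> w' (snd f) (fst f)"
  shows "tri_arcs (snd e) w (fst e) \<inter> tri_arcs (snd f) w' (fst f) \<noteq> {}"
  using assms before_asym[OF distinct_ordering]
  unfolding strictly_between_def tri_arcs_def by auto

lemma Pi_tri_disjoint:
  assumes good: "good_arc_set A \<sigma> X" and "x \<in> X" "y \<in> X" "x \<noteq> y"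
  shows "Pi_tri \<sigma> x \<inter> Pi_tri \<sigma> y = {}"
proof -
  obtain e f e' f' where xy: "x = (e, f)" "y = (e', f')" by (cases x, cases y)
  have G': "(e, f) \<in> G'_arcs A \<sigma>" "(e', f') \<in> G'_arcs A \<sigma>"
    using good \<open>x \<in> X\<close> \<open>y \<in> X\<close> xy unfolding good_arc_set_def by auto
  then have B: "e \<in> B" "f \<in> B" "e' \<in> B" "f' \<in> B" using G'_arcs_iff by auto
  obtain w where w: "w \<in> {fst f, snd f}" "strictly_between \<sigma> w (snd e) (fst e)"
      "Pi_tri \<sigma> x = tri_arcs (snd e) w (fst e)"
    using Pi_tri_G'_arc[OF G'(1)] xy by metis
  obtain w' where w': "w' \<in> {fst f', snd f'}" "strictly_between \<sigma> w' (snd e') (fst e')"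
      "Pi_tri \<sigma> y = tri_arcs (snd e') w' (fst e')"
    using Pi_tri_G'_arc[OF G'(2)] xy by metis
  have "e \<noteq> e'" using good \<open>x \<in> X\<close> \<open>y \<in> X\<close> \<open>x \<noteq> y\<close> xy unfolding good_arc_set_def by blast
  then have e_e': "{fst e, snd e} \<inter> {fst e', snd e'} = {}" using backward_arcs_disjoint B by blast
  have not_digon: "\<not> (f = e' \<and> f' = e)"
    using good \<open>x \<in> X\<close> \<open>y \<in> X\<close> xy unfolding good_arc_set_def by blast
  have "w \<noteq> snd e" "w \<noteq> fst e" "snd e \<noteq> fst e" "w' \<notin> {fst e', snd e'}"
    using strictly_between_distinct[OF distinct_ordering] w(2) w'(2) by auto
  moreover have "f = e'" if "w \<in> {fst e', snd e'}"
    using backward_arcs_disjoint[OF B(2,3)] w(1) that by blast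
  moreover have "f' = e" if "w' \<in> {fst e, snd e}"
    using backward_arcs_disjoint[OF B(4,1)] w'(1) that by blast
  \<comment> \<open>the matching property leaves at most one common vertex, \<open>w\<close> or \<open>w'\<close>\<close>
  ultimately obtain v where "{snd e, w, fst e} \<inter> {snd e', w', fst e'} \<subseteq> {v}"
    using e_e' not_digon by (cases "w \<in> {fst e', snd e'}") blast+
  then show ?thesis
    unfolding w(3) w'(3)
    using tri_arcs_disjoint_if_one_common_vertex \<open>w \<noteq> snd e\<close> \<open>w \<noteq> fst e\<close> \<open>snd e \<noteq> fst e\<close>
    by metis
qed

lemma inj_on_Pi_tri: "good_arc_set A \<sigma> X \<Longrightarrow> inj_on (Pi_tri \<sigma>) X"
  using Pi_tri_disjoint tri_arcs_nonempty
  unfolding inj_on_def Pi_tri_def Let_def by (metis Int_absorb)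

lemma triangle_packing_Pi_tri:
  assumes "good_arc_set A \<sigma> X"
  shows "triangle_packing A (Pi_tri \<sigma> ` X)"
proof -
  have "Pi_tri \<sigma> ` X \<subseteq> triangles A"
    using assms Pi_tri_in_triangles unfolding good_arc_set_def by blast
  then show ?thesis
    using Pi_tri_disjoint[OF assms] unfolding triangle_packing_def by blast
qed

lemma triangle_encoding:
  assumes "T \<in> triangles A"
  obtains e f w where "e \<in> B" "f \<in> B" "w \<in> {fst f, snd f}"
    "strictly_between \<sigma> w (snd e) (fst e)" "T = tri_arcs (snd e) w (fst e)"
proof -
  obtain x y z where "is_triangle A x y z" "T = tri_arcs x y z"
    using assms unfolding triangles_def by blast
  then obtain t h w where th: "(t, h) \<in> B" "strictly_between \<sigma> w h t" "T = tri_arcs h w t"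
    using triangle_through_backward_arc by metis
  then have "w \<in> V"
    using before_imp_in_set[of \<sigma> w t] set_ordering unfolding strictly_between_def by blast
  then obtain f where "f \<in> B" "w \<in> {fst f, snd f}" using backward_arcs_cover by blast
  then show ?thesis using that[of "(t, h)" f w] th by simp
qed

lemma good_arc_set_of_triangle_packing:
  assumes P: "triangle_packing A P"
  obtains X where "good_arc_set A \<sigma> X" "card X = card P"
proof -
  let ?enc = "\<lambda>T e f w. e \<in> B \<and> f \<in> B \<and> w \<in> {fst f, snd f} \<and>
      strictly_between \<sigma> w (snd e) (fst e) \<and> T = tri_arcs (snd e) w (fst e)"
  have "\<forall>T\<in>P. \<exists>e f w. ?enc T e f w"
  proof
    fix T assume "T \<in> P"
    then have "T \<in> triangles A" using P unfolding triangle_packing_def by blast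
    then show "\<exists>e f w. ?enc T e f w" by (rule triangle_encoding) blast
  qed
  then obtain E F W where "\<forall>T\<in>P. ?enc T (E T) (F T) (W T)" by metis
  then have E_B: "E T \<in> B" and F_B: "F T \<in> B" and W_F: "W T \<in> {fst (F T), snd (F T)}"
    and W_between: "strictly_between \<sigma> (W T) (snd (E T)) (fst (E T))"
    and T_eq: "T = tri_arcs (snd (E T)) (W T) (fst (E T))" if "T \<in> P" for T
    using that by blast+
  have disjoint: "T \<inter> T' = {}" if "T \<in> P" "T' \<in> P" "T \<noteq> T'" for T T'
    using P that unfolding triangle_packing_def by blast
  have E_mem: "E T \<in> T" if "T \<in> P" for T
  proof -
    have "E T \<in> tri_arcs (snd (E T)) (W T) (fst (E T))" by (simp add: tri_arcs_def)
    with T_eq[OF that] show ?thesis by metis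
  qed
  have E_inj: "inj_on E P"
  proof (rule inj_onI, rule ccontr)
    fix T T' assume "T \<in> P" "T' \<in> P" "E T = E T'" "T \<noteq> T'"
    then have "E T \<in> T \<inter> T'" using E_mem[of T] E_mem[of T'] by simp
    then show False using disjoint[OF \<open>T \<in> P\<close> \<open>T' \<in> P\<close> \<open>T \<noteq> T'\<close>] by simp
  qed
  then have EF_inj: "inj_on (\<lambda>T. (E T, F T)) P" unfolding inj_on_def by simp
  define X where "X = (\<lambda>T. (E T, F T)) ` P"
  have "(E T, F T) \<in> G'_arcs A \<sigma>" if "T \<in> P" for T
    unfolding G'_arcs_iff using E_B[OF that] F_B[OF that] W_F[OF that] W_between[OF that] by blast
  then have "X \<subseteq> G'_arcs A \<sigma>" unfolding X_def by blast
  moreover have "f = g" if arcs: "(e, f) \<in> X" "(e, g) \<in> X" for e f g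
  proof -
    obtain T T' where "T \<in> P" "T' \<in> P" "e = E T" "f = F T" "e = E T'" "g = F T'"
      using arcs unfolding X_def by blast
    then show ?thesis using inj_onD[OF E_inj] by metis
  qed
  moreover have "(f, e) \<notin> X" if "(e, f) \<in> X" for e f
  proof
    assume "(f, e) \<in> X"
    then obtain T T' where T: "T \<in> P" "E T = e" "F T = f" and T': "T' \<in> P" "E T' = f" "F T' = e"
      using \<open>(e, f) \<in> X\<close> unfolding X_def by auto
    have "T \<inter> T' \<noteq> {}"
      using triangles_of_digon_intersect[OF W_F[OF T(1)] W_between[OF T(1)]]
        W_F[OF T'(1)] W_between[OF T'(1)] T_eq[OF T(1)] T_eq[OF T'(1)] T T' by metis
    moreover have "e \<noteq> f"
      using \<open>(e, f) \<in> X\<close> \<open>X \<subseteq> G'_arcs A \<sigma>\<close> unfolding G'_arcs_def by auto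
    then have "T \<noteq> T'" using T T' by blast
    ultimately show False using disjoint T(1) T'(1) by blast
  qed
  ultimately have "good_arc_set A \<sigma> X" unfolding good_arc_set_def by blast
  moreover have "card X = card P" unfolding X_def using card_image[OF EF_inj] .
  ultimately show ?thesis using that by blast
qed

lemma card_good_arc_sets_eq_card_triangle_packings:
  "card ` {X. good_arc_set A \<sigma> X} = card ` {P. triangle_packing A P}"
proof (intro equalityI subsetI)
  fix n assume "n \<in> card ` {X. good_arc_set A \<sigma> X}"
  then obtain X where "good_arc_set A \<sigma> X" "n = card X" by blast
  then show "n \<in> card ` {P. triangle_packing A P}"
    using triangle_packing_Pi_tri card_image[OF inj_on_Pi_tri] by (metis image_eqI mem_Collect_eq)
next
  fix n assume "n \<in> card ` {P. triangle_packing A P}"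
  then obtain P where "triangle_packing A P" "n = card P" by blast
  then show "n \<in> card ` {X. good_arc_set A \<sigma> X}"
    using good_arc_set_of_triangle_packing by (metis image_eqI mem_Collect_eq)
qed

end

theorem mainTheorem10:
  fixes V :: "'a set" and A :: "('a \<times> 'a) set" and \<sigma> :: "'a list"
  assumes "finite V" and "tournament V A" and "is_ordering V \<sigma>" and "fully_sparse V A \<sigma>"
  shows "packing_number A = Max (card ` {X. good_arc_set A \<sigma> X})
    \<and> (\<forall>X. good_arc_set A \<sigma> X \<longrightarrow>
          (\<forall>x\<in>X. Pi_tri \<sigma> x \<in> triangles A) \<and>
          (\<forall>x\<in>X. \<forall>y\<in>X. x \<noteq> y \<longrightarrow> Pi_tri \<sigma> x \<inter> Pi_tri \<sigma> y = {}))
    \<and> (\<forall>X. good_arc_set A \<sigma> X \<longrightarrow>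
          (card X = Max (card ` {Y. good_arc_set A \<sigma> Y}) \<longleftrightarrow>
           max_triangle_packing A (Pi_tri \<sigma> ` X)))"
proof -
  interpret fully_sparse_tournament V A \<sigma> using assms by unfold_locales
  have "packing_number A = Max (card ` {X. good_arc_set A \<sigma> X})"
    unfolding packing_number_def card_good_arc_sets_eq_card_triangle_packings ..
  moreover have "max_triangle_packing A (Pi_tri \<sigma> ` X) \<longleftrightarrow> card X = packing_number A"
    if "good_arc_set A \<sigma> X" for X
    using triangle_packing_Pi_tri[OF that] card_image[OF inj_on_Pi_tri[OF that]]
    unfolding max_triangle_packing_def by simp
  moreover have "\<forall>x\<in>X. Pi_tri \<sigma> x \<in> triangles A" if "good_arc_set A \<sigma> X" for X
    using that Pi_tri_in_triangles unfolding good_arc_set_def by blast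
  ultimately show ?thesis using Pi_tri_disjoint by metis
qed

end
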